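(* Let $N\ge 1$ be an integer and let $q$ satisfy one of the following: (i) $q$ is real with $q>0$; or (ii) $q=e^{i\pi\varphi}$ with $0<\varphi<\frac{1}{2N}$. Let $\pi_N:U_q(su(2))\to \mathrm{End}(V_N)$ be the $(N+1)$-dimensional irreducible representation, equipped with the Hilbert space structure making it a unitary ($*$-)representation for the star structure $H^*=H$, $(X^\pm)^*=X^\mp$. Let $\mathcal{S}^2_{q,N}:=\mathrm{End}(V_N)$, with involution $f\mapsto f^*$ the Hilbert space adjoint, and for $r>0$ define the integral $$\int f := \frac{4\pi r^2}{[N+1]_q}\,\mathrm{Tr}\big(f\,\pi_N(q^{H})\big),\qquad f\in \mathcal{S}^2_{q,N}.$$ Then for every $f\in\mathcal{S}^2_{q,N}$: in case (i), $\overline{\int f}=\int f^*$; in case (ii), $\overline{\int f}=\int f^*\,\pi_N(q^{-2H})$. (Here the bar denotes complex conjugation.)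
   Context: $U_q(su(2))$ is the algebra generated by $H,X^+,X^-$ with relations $[H,X^\pm]=\pm 2X^\pm$, $[X^+,X^-]=[H]_q:=\frac{q^H-q^{-H}}{q-q^{-1}}$; $q$-numbers are $[n]_q=\frac{q^n-q^{-n}}{q-q^{-1}}$. Its Hopf structure is $\Delta(H)=H\otimes1+1\otimes H$, $\Delta(X^\pm)=X^\pm\otimes q^{H/2}+q^{-H/2}\otimes X^\pm$, $S(H)=-H$, $S(X^\pm)=-q^{\pm1}X^\pm$, $\varepsilon(H)=\varepsilon(X^\pm)=0$. On $V_N$, $q^{H}$ acts diagonally in a weight basis, by $q^m$ on a vector of $H$-weight $m$. Under the stated assumptions on $q$, $V_N$ admits an inner product for which $\pi_N(u^* )=\pi_N(u)^\dagger$. The algebra $\mathcal{S}^2_{q,N}$ is the $q$-deformed fuzzy sphere (it is generated by the images of the $U_q(su(2))$ generators). *)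

theory Defs
  imports Complex_Main "Jordan_Normal_Form.Matrix"
begin

definition qnum :: "complex \<Rightarrow> nat \<Rightarrow> complex" where
  "qnum q n = (if q = 1 then of_nat n else (q ^ n - inverse q ^ n) / (q - inverse q))"

text \<open>V_N = C^(N+1) with its orthonormal weight basis e_0..e_N; e_k has H-weight N - 2k.
  In this basis (which is orthonormal for the inner product making pi_N a *-representation),
  pi_N(H) is diagonal and pi_N(q^(aH)) acts by q^(a m) on weight-m vectors.\<close>
definition weight :: "nat \<Rightarrow> nat \<Rightarrow> int" where
  "weight N k = int N - 2 * int k"

definition pi_H :: "nat \<Rightarrow> complex mat" where
  "pi_H N = mat (N+1) (N+1) (\<lambda>(i,j). if i = j then of_int (weight N i) else 0)"

definition pi_qH :: "nat \<Rightarrow> complex \<Rightarrow> int \<Rightarrow> complex mat" where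
  "pi_qH N q a = mat (N+1) (N+1) (\<lambda>(i,j). if i = j then q powi (a * weight N i) else 0)"

definition adj :: "complex mat \<Rightarrow> complex mat" where
  "adj f = mat (dim_col f) (dim_row f) (\<lambda>(i,j). cnj (f $$ (j,i)))"

definition tr :: "complex mat \<Rightarrow> complex" where
  "tr f = (\<Sum>i<dim_row f. f $$ (i,i))"

definition qint :: "complex \<Rightarrow> nat \<Rightarrow> real \<Rightarrow> complex mat \<Rightarrow> complex" where
  "qint q N r f = (4 * of_real pi * of_real (r^2) / qnum q (N+1)) * tr (f * pi_qH N q 1)"

end

theory Submission
  imports Defs
begin

text \<open>Conjugating the trace formula conjugates the matrix entries and q, so the
  conjugate of the integral of f is the integral of adj f at the parameter cnj q. For real q
  this is the first claim. On the unit circle cnj q = inverse q; since [n]_q is invariant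
  under q \<mapsto> inverse q and pi_N(q^-H) = pi_N(q^-2H) pi_N(q^H), this gives the second.\<close>

lemma cnj_qnum: "cnj (qnum q n) = qnum (cnj q) n"
  by (simp add: qnum_def)

lemma qnum_inverse: "qnum (inverse q) n = qnum q n"
proof -
  have "(a - b) / (c - d) = (b - a) / (d - c)" for a b c d :: complex
    by (metis minus_diff_eq minus_divide_divide)
  then show ?thesis
    by (simp add: qnum_def power_inverse)
qed

lemma mult_pi_qH_entry:
  assumes g: "g \<in> carrier_mat n (N+1)" and i: "i < n" and j: "j < N+1"
  shows "(g * pi_qH N q a) $$ (i,j) = g $$ (i,j) * q powi (a * weight N j)"
proof -
  have "(g * pi_qH N q a) $$ (i,j)
      = (\<Sum>k<N+1. g $$ (i,k) * (if k = j then q powi (a * weight N k) else 0))"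
    using g i j by (simp add: pi_qH_def scalar_prod_def atLeast0LessThan)
  also have "\<dots> = (\<Sum>k<N+1. if k = j then g $$ (i,j) * q powi (a * weight N j) else 0)"
    by (rule sum.cong) auto
  also have "\<dots> = g $$ (i,j) * q powi (a * weight N j)"
    using j by simp
  finally show ?thesis .
qed

lemma pi_qH_mult:
  assumes "q \<noteq> 0"
  shows "pi_qH N q a * pi_qH N q b = pi_qH N q (a + b)"
proof (rule eq_matI)
  fix i j assume "i < dim_row (pi_qH N q (a + b))" "j < dim_col (pi_qH N q (a + b))"
  then have "i < N+1" "j < N+1" by (simp_all add: pi_qH_def)
  then have "(pi_qH N q a * pi_qH N q b) $$ (i,j) = pi_qH N q a $$ (i,j) * q powi (b * weight N j)"
    by (intro mult_pi_qH_entry) (simp_all add: pi_qH_def)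
  with \<open>i < N+1\<close> \<open>j < N+1\<close>
  show "(pi_qH N q a * pi_qH N q b) $$ (i,j) = pi_qH N q (a + b) $$ (i,j)"
    by (simp add: pi_qH_def distrib_right power_int_add assms)
qed (simp_all add: pi_qH_def)

lemma pi_qH_inverse: "pi_qH N (inverse q) a = pi_qH N q (- a)"
  by (rule eq_matI) (auto simp: pi_qH_def power_int_inverse power_int_minus)

lemma tr_mult_pi_qH:
  assumes "g \<in> carrier_mat (N+1) (N+1)"
  shows "tr (g * pi_qH N q a) = (\<Sum>i<N+1. g $$ (i,i) * q powi (a * weight N i))"
  using assms by (simp add: tr_def mult_pi_qH_entry)

lemma adj_carrier [simp]: "f \<in> carrier_mat n m \<Longrightarrow> adj f \<in> carrier_mat m n"
  by (simp add: adj_def)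

lemma cnj_tr_mult_pi_qH:
  assumes "f \<in> carrier_mat (N+1) (N+1)"
  shows "cnj (tr (f * pi_qH N q a)) = tr (adj f * pi_qH N (cnj q) a)"
  using assms by (simp add: tr_mult_pi_qH adj_def)

lemma cnj_qint:
  assumes "f \<in> carrier_mat (N+1) (N+1)"
  shows "cnj (qint q N r f) = qint (cnj q) N r (adj f)"
  using assms by (simp add: qint_def cnj_qnum cnj_tr_mult_pi_qH)

lemma qint_inverse:
  assumes "q \<noteq> 0" and "g \<in> carrier_mat (N+1) (N+1)"
  shows "qint (inverse q) N r g = qint q N r (g * pi_qH N q (-2))"
proof -
  have "g * pi_qH N q (-2) * pi_qH N q 1 = g * (pi_qH N q (-2) * pi_qH N q 1)"
    using assms(2) by (intro assoc_mult_mat) (auto simp: pi_qH_def)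
  then have "g * pi_qH N (inverse q) 1 = g * pi_qH N q (-2) * pi_qH N q 1"
    using assms(1) by (simp add: pi_qH_mult pi_qH_inverse)
  then show ?thesis
    by (simp add: qint_def qnum_inverse)
qed

theorem mainTheorem1:
  fixes N :: nat and q :: complex and r :: real and f :: "complex mat"
  assumes "N \<ge> 1" and "r > 0" and "f \<in> carrier_mat (N+1) (N+1)"
  shows "((\<exists>x::real. x > 0 \<and> q = of_real x) \<longrightarrow>
            cnj (qint q N r f) = qint q N r (adj f))
       \<and> ((\<exists>\<phi>::real. 0 < \<phi> \<and> \<phi> < 1 / (2 * real N) \<and> q = exp (\<i> * of_real (pi * \<phi>))) \<longrightarrow>
            cnj (qint q N r f) = qint q N r (adj f * pi_qH N q (-2)))"
proof (intro conjI impI)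
  assume "\<exists>x::real. x > 0 \<and> q = of_real x"
  then have "cnj q = q" by auto
  then show "cnj (qint q N r f) = qint q N r (adj f)"
    using cnj_qint [OF assms(3)] by simp
next
  assume "\<exists>\<phi>::real. 0 < \<phi> \<and> \<phi> < 1 / (2 * real N) \<and> q = exp (\<i> * of_real (pi * \<phi>))"
  then obtain \<phi> :: real where "q = cis (pi * \<phi>)"
    by (auto simp: cis_conv_exp)
  then have "cnj q = inverse q" and "q \<noteq> 0"
    by (simp_all add: cis_cnj)
  then show "cnj (qint q N r f) = qint q N r (adj f * pi_qH N q (-2))"
    using cnj_qint [OF assms(3)] qint_inverse [of q "adj f"] assms(3) by simp
qed

end
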